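(* Let $\Gamma_1=(V_1,m_1,\tau_1)$ and $\Gamma_2=(V_2,m_2,\tau_2)$ be weak $W$-graphs such that $\mathbb{C}V_1$ and $\mathbb{C}V_2$ are isomorphic representations of $W$. Then $\Gamma_1$ and $\Gamma_2$ have the same $\tau$-invariant, i.e. $\{\tau_1(v):v\in V_1\}=\{\tau_2(v):v\in V_2\}$.
   Context: $W$ is a Weyl group with a fixed set $\Delta$ of simple roots; for a root $\alpha$, $s_\alpha$ is the reflection in the hyperplane orthogonal to $\alpha$. A weak $W$-graph is a triple $\Gamma=(V,m,\tau)$ where $V$ is a finite set, $m:V\times V\to\mathbb{C}$ is a map, and $\tau$ is a map from $V$ to the power set of $\Delta$, such that the linear maps $s_\alpha:\mathbb{C}V\to\mathbb{C}V$ ($\alpha\in\Delta$) given on basis vectors by $s_\alpha(v)=-v$ if $\alpha\in\tau(v)$ and $s_\alpha(v)=v-\sum_{u\in V,\ \alpha\in\tau(u)} m(u,v)u$ if $\alpha\notin\tau(v)$ define a representation of $W$ on $\mathbb{C}V$. The $\tau$-invariant of $\Gamma$ is the image of $\tau$, the set $\{\tau(v): v\in V\}$. *)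

theory Defs
  imports "HOL-Analysis.Analysis"
begin

definition refl :: "'a::euclidean_space \<Rightarrow> 'a \<Rightarrow> 'a" where
  "refl \<alpha> x = x - ((2 * (x \<bullet> \<alpha>)) / (\<alpha> \<bullet> \<alpha>)) *\<^sub>R \<alpha>"

definition root_system :: "'a::euclidean_space set \<Rightarrow> bool" where
  "root_system R \<longleftrightarrow> finite R \<and> 0 \<notin> R \<and> span R = UNIV
     \<and> (\<forall>\<alpha>\<in>R. \<forall>\<beta>\<in>R. refl \<alpha> \<beta> \<in> R)
     \<and> (\<forall>\<alpha>\<in>R. \<forall>\<beta>\<in>R. (2 * (\<beta> \<bullet> \<alpha>)) / (\<alpha> \<bullet> \<alpha>) \<in> \<int>)
     \<and> (\<forall>\<alpha>\<in>R. \<forall>c::real. c *\<^sub>R \<alpha> \<in> R \<longrightarrow> c = 1 \<or> c = -1)"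

definition simple_system :: "'a::euclidean_space set \<Rightarrow> 'a set \<Rightarrow> bool" where
  "simple_system R \<Delta> \<longleftrightarrow> \<Delta> \<subseteq> R \<and> independent \<Delta>
     \<and> (\<forall>\<beta>\<in>R. \<exists>c::'a \<Rightarrow> real. (\<forall>\<alpha>\<in>\<Delta>. c \<alpha> \<in> \<int>) \<and> \<beta> = (\<Sum>\<alpha>\<in>\<Delta>. c \<alpha> *\<^sub>R \<alpha>)
          \<and> ((\<forall>\<alpha>\<in>\<Delta>. c \<alpha> \<ge> 0) \<or> (\<forall>\<alpha>\<in>\<Delta>. c \<alpha> \<le> 0)))"

inductive_set weyl_group :: "'a::euclidean_space set \<Rightarrow> ('a \<Rightarrow> 'a) set" for R where
  id_in: "id \<in> weyl_group R"
| step: "w \<in> weyl_group R \<Longrightarrow> \<alpha> \<in> R \<Longrightarrow> refl \<alpha> \<circ> w \<in> weyl_group R"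

text \<open>\<open>\<complex>V\<close> is modelled as the space of functions \<open>V \<Rightarrow> complex\<close>, with \<open>V\<close> a finite type;
  a basis vector \<open>v\<close> is the indicator function of \<open>v\<close>.\<close>

definition clin :: "(('v \<Rightarrow> complex) \<Rightarrow> ('u \<Rightarrow> complex)) \<Rightarrow> bool" where
  "clin f \<longleftrightarrow> (\<forall>x y. f (\<lambda>u. x u + y u) = (\<lambda>u. f x u + f y u))
              \<and> (\<forall>c x. f (\<lambda>u. c * x u) = (\<lambda>u. c * f x u))"

definition is_rep :: "('a::euclidean_space \<Rightarrow> 'a) set \<Rightarrow>
    (('a \<Rightarrow> 'a) \<Rightarrow> ('v \<Rightarrow> complex) \<Rightarrow> ('v \<Rightarrow> complex)) \<Rightarrow> bool" where
  "is_rep W \<rho> \<longleftrightarrow> (\<forall>w\<in>W. clin (\<rho> w)) \<and> \<rho> id = id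
     \<and> (\<forall>w1\<in>W. \<forall>w2\<in>W. \<rho> (w1 \<circ> w2) = \<rho> w1 \<circ> \<rho> w2)"

definition rep_iso :: "('a::euclidean_space \<Rightarrow> 'a) set \<Rightarrow>
    (('a \<Rightarrow> 'a) \<Rightarrow> ('v \<Rightarrow> complex) \<Rightarrow> ('v \<Rightarrow> complex)) \<Rightarrow>
    (('a \<Rightarrow> 'a) \<Rightarrow> ('u \<Rightarrow> complex) \<Rightarrow> ('u \<Rightarrow> complex)) \<Rightarrow> bool" where
  "rep_iso W \<rho>1 \<rho>2 \<longleftrightarrow> (\<exists>T. clin T \<and> bij T \<and> (\<forall>w\<in>W. T \<circ> \<rho>1 w = \<rho>2 w \<circ> T))"

definition wg_basis_img :: "('v::finite \<Rightarrow> 'v \<Rightarrow> complex) \<Rightarrow> ('v \<Rightarrow> 'a set) \<Rightarrow> 'a \<Rightarrow> 'v \<Rightarrow> ('v \<Rightarrow> complex)" where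
  "wg_basis_img m \<tau> \<alpha> v =
     (if \<alpha> \<in> \<tau> v then (\<lambda>u. - (if u = v then 1 else 0))
      else (\<lambda>u. (if u = v then 1 else 0) - (if \<alpha> \<in> \<tau> u then m u v else 0)))"

definition wg_map :: "('v::finite \<Rightarrow> 'v \<Rightarrow> complex) \<Rightarrow> ('v \<Rightarrow> 'a set) \<Rightarrow> 'a \<Rightarrow> ('v \<Rightarrow> complex) \<Rightarrow> ('v \<Rightarrow> complex)" where
  "wg_map m \<tau> \<alpha> f = (\<lambda>u. \<Sum>v\<in>UNIV. f v * wg_basis_img m \<tau> \<alpha> v u)"

definition wgraph_rep :: "'a::euclidean_space set \<Rightarrow> 'a set \<Rightarrow> ('v::finite \<Rightarrow> 'v \<Rightarrow> complex) \<Rightarrow> ('v \<Rightarrow> 'a set)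
    \<Rightarrow> (('a \<Rightarrow> 'a) \<Rightarrow> ('v \<Rightarrow> complex) \<Rightarrow> ('v \<Rightarrow> complex)) \<Rightarrow> bool" where
  "wgraph_rep R \<Delta> m \<tau> \<rho> \<longleftrightarrow> is_rep (weyl_group R) \<rho> \<and> (\<forall>\<alpha>\<in>\<Delta>. \<rho> (refl \<alpha>) = wg_map m \<tau> \<alpha>)"

definition weak_W_graph :: "'a::euclidean_space set \<Rightarrow> 'a set \<Rightarrow> ('v::finite \<Rightarrow> 'v \<Rightarrow> complex) \<Rightarrow> ('v \<Rightarrow> 'a set) \<Rightarrow> bool" where
  "weak_W_graph R \<Delta> m \<tau> \<longleftrightarrow> (\<forall>v. \<tau> v \<subseteq> \<Delta>) \<and> (\<exists>\<rho>. wgraph_rep R \<Delta> m \<tau> \<rho>)"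

end

theory Submission
  imports Defs "HOL-Analysis.Cartesian_Space"
begin

text \<open>For \<open>J \<subseteq> \<Delta>\<close>, the common \<open>-1\<close>-eigenspace of the simple reflections \<open>s\<^sub>\<alpha>\<close>, \<open>\<alpha> \<in> J\<close>,
  acting on \<open>\<complex>V\<close> is spanned by the basis vectors \<open>v\<close> with \<open>J \<subseteq> \<tau>(v)\<close>: a vector with a nonzero
  coordinate at some \<open>u\<close> with \<open>\<alpha> \<notin> \<tau>(u)\<close> keeps that coordinate under \<open>s\<^sub>\<alpha>\<close>. An isomorphism of
  representations preserves these eigenspaces, so \<open>#{v. J \<subseteq> \<tau>(v)}\<close> depends only on the
  representation. Moebius inversion over the subsets of \<open>\<Delta>\<close> then shows that the number of
  vertices with \<open>\<tau>(v) = J\<close> does too, and in particular whether it is positive.\<close>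

definition coord_subspace :: "'v set \<Rightarrow> ('v \<Rightarrow> 'b::zero) set" where
  "coord_subspace S = {x. \<forall>u. u \<notin> S \<longrightarrow> x u = 0}"

definition joint_eigenspace ::
    "('i \<Rightarrow> ('v \<Rightarrow> complex) \<Rightarrow> ('v \<Rightarrow> complex)) \<Rightarrow> 'i set \<Rightarrow> complex \<Rightarrow> ('v \<Rightarrow> complex) set" where
  "joint_eigenspace f J c = {x. \<forall>i\<in>J. f i x = (\<lambda>u. c * x u)}"

lemma joint_eigenspace_cong:
  "(\<And>i. i \<in> J \<Longrightarrow> f i = g i) \<Longrightarrow> joint_eigenspace f J c = joint_eigenspace g J c"
  unfolding joint_eigenspace_def by simp

lemma clin_scale:
  assumes "clin T"
  shows "T (\<lambda>u. c * x u) = (\<lambda>u. c * T x u)"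
  using assms unfolding clin_def by blast

lemma clin_add:
  assumes "clin T"
  shows "T (\<lambda>u. x u + y u) = (\<lambda>u. T x u + T y u)"
  using assms unfolding clin_def by blast

lemma image_joint_eigenspace_intertwining:
  assumes "clin T" and "bij T" and intertw: "\<And>i. i \<in> J \<Longrightarrow> T \<circ> f i = g i \<circ> T"
  shows "T ` joint_eigenspace f J c = joint_eigenspace g J c"
proof -
  have eigen_iff: "g i (T x) = (\<lambda>u. c * T x u) \<longleftrightarrow> f i x = (\<lambda>u. c * x u)" if "i \<in> J" for i x
  proof -
    have "g i (T x) = T (f i x)"
      using fun_cong[OF intertw[OF that], of x] by simp
    moreover have "(\<lambda>u. c * T x u) = T (\<lambda>u. c * x u)"
      using clin_scale[OF \<open>clin T\<close>] by simp
    ultimately show ?thesis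
      using bij_is_inj[OF \<open>bij T\<close>] by (simp add: inj_eq)
  qed
  show ?thesis
  proof (intro equalityI subsetI)
    fix y assume "y \<in> joint_eigenspace g J c"
    moreover obtain x where "y = T x"
      using bij_is_surj[OF \<open>bij T\<close>] by (metis surjD)
    ultimately show "y \<in> T ` joint_eigenspace f J c"
      using eigen_iff unfolding joint_eigenspace_def by auto
  qed (use eigen_iff in \<open>auto simp: joint_eigenspace_def\<close>)
qed

lemma vec_lambda_coord_subspace:
  "vec_lambda ` coord_subspace S = {x::'a::zero^'n. \<forall>i. i \<notin> S \<longrightarrow> x $ i = 0}"
proof (intro equalityI subsetI)
  fix x :: "'a^'n" assume "x \<in> {x. \<forall>i. i \<notin> S \<longrightarrow> x $ i = 0}"
  then have "vec_nth x \<in> coord_subspace S"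
    unfolding coord_subspace_def by simp
  then show "x \<in> vec_lambda ` coord_subspace S"
    by (metis image_eqI vec_nth_inverse)
qed (auto simp: coord_subspace_def)

text \<open>The library has no vector space structure on \<open>'v \<Rightarrow> complex\<close>, so dimensions are
  counted after transport to \<open>complex ^ 'v\<close>.\<close>

lemma linear_vec_lambda_clin:
  fixes T :: "('v1::finite \<Rightarrow> complex) \<Rightarrow> ('v2::finite \<Rightarrow> complex)"
  assumes "clin T"
  shows "Vector_Spaces.linear (*s) (*s) (\<lambda>x :: complex^'v1. vec_lambda (T (vec_nth x)))"
  unfolding Vector_Spaces.linear_iff
proof (intro conjI allI)
  show "vector_space ((*s) :: complex \<Rightarrow> complex^'v1 \<Rightarrow> _)"
    and "vector_space ((*s) :: complex \<Rightarrow> complex^'v2 \<Rightarrow> _)"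
    by (fact vec.vector_space_axioms)+
  fix x y :: "complex^'v1" and c :: complex
  have "vec_nth (x + y) = (\<lambda>u. x $ u + y $ u)"
    by auto
  then have "T (vec_nth (x + y)) = (\<lambda>u. T (vec_nth x) u + T (vec_nth y) u)"
    by (simp only: clin_add[OF \<open>clin T\<close>])
  then show "vec_lambda (T (vec_nth (x + y))) = vec_lambda (T (vec_nth x)) + vec_lambda (T (vec_nth y))"
    by (simp add: vec_eq_iff)
  have "vec_nth (c *s x) = (\<lambda>u. c * x $ u)"
    by auto
  then have "T (vec_nth (c *s x)) = (\<lambda>u. c * T (vec_nth x) u)"
    by (simp only: clin_scale[OF \<open>clin T\<close>])
  then show "vec_lambda (T (vec_nth (c *s x))) = c *s vec_lambda (T (vec_nth x))"
    by (simp add: vec_eq_iff)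
qed

lemma card_eq_if_clin_image_coord_subspace:
  fixes T :: "('v1::finite \<Rightarrow> complex) \<Rightarrow> ('v2::finite \<Rightarrow> complex)"
  assumes "clin T" and "inj T" and img: "T ` coord_subspace S1 = coord_subspace S2"
  shows "card S1 = card S2"
proof -
  define T' :: "complex^'v1 \<Rightarrow> complex^'v2" where "T' x = vec_lambda (T (vec_nth x))" for x
  have "inj T'"
    using \<open>inj T\<close> unfolding T'_def
    by (intro injI) (simp add: vec_lambda_inject inj_eq vec_nth_inject)
  then have "vec.dim (T' ` (vec_lambda ` coord_subspace S1))
      = vec.dim (vec_lambda ` coord_subspace S1 :: (complex^'v1) set)"
    using linear_vec_lambda_clin[OF \<open>clin T\<close>] unfolding T'_def[abs_def]
    by (intro vec.dim_image_eq) (auto intro: inj_on_subset)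
  moreover have "T' ` (vec_lambda ` coord_subspace S1) = vec_lambda ` coord_subspace S2"
    unfolding img[symmetric] image_image T'_def by (simp add: vec_lambda_inverse)
  ultimately show ?thesis
    by (simp add: vec_lambda_coord_subspace dim_substandard_cart)
qed

lemma wg_map_apply_not_in_tau:
  fixes m :: "'v::finite \<Rightarrow> 'v \<Rightarrow> complex"
  assumes "\<alpha> \<notin> \<tau> u"
  shows "wg_map m \<tau> \<alpha> x u = x u"
proof -
  have "wg_map m \<tau> \<alpha> x u = (\<Sum>v\<in>UNIV. if v = u then x u else 0)"
    unfolding wg_map_def
    by (rule sum.cong) (use assms in \<open>auto simp: wg_basis_img_def\<close>)
  then show ?thesis by simp
qed

lemma wg_map_eq_neg_if_supported_in_tau:
  fixes m :: "'v::finite \<Rightarrow> 'v \<Rightarrow> complex"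
  assumes "\<And>v. \<alpha> \<notin> \<tau> v \<Longrightarrow> x v = 0"
  shows "wg_map m \<tau> \<alpha> x = (\<lambda>u. - x u)"
proof
  fix u
  show "wg_map m \<tau> \<alpha> x u = - x u"
  proof (cases "\<alpha> \<in> \<tau> u")
    case True
    have "wg_map m \<tau> \<alpha> x u = (\<Sum>v\<in>UNIV. if v = u then - x u else 0)"
      unfolding wg_map_def
      by (rule sum.cong) (use assms True in \<open>auto simp: wg_basis_img_def\<close>)
    then show ?thesis by simp
  next
    case False
    then show ?thesis by (simp add: wg_map_apply_not_in_tau assms)
  qed
qed

lemma joint_eigenspace_wg_map_neg:
  fixes m :: "'v::finite \<Rightarrow> 'v \<Rightarrow> complex"
  shows "joint_eigenspace (wg_map m \<tau>) J (-1) = coord_subspace {u. J \<subseteq> \<tau> u}"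
proof (intro equalityI subsetI)
  fix x :: "'v \<Rightarrow> complex"
  assume x: "x \<in> joint_eigenspace (wg_map m \<tau>) J (-1)"
  have "x u = 0" if "\<not> J \<subseteq> \<tau> u" for u
  proof -
    obtain \<alpha> where "\<alpha> \<in> J" "\<alpha> \<notin> \<tau> u" using \<open>\<not> J \<subseteq> \<tau> u\<close> by blast
    have "wg_map m \<tau> \<alpha> x u = - x u"
      using x \<open>\<alpha> \<in> J\<close> unfolding joint_eigenspace_def by simp
    moreover have "wg_map m \<tau> \<alpha> x u = x u"
      using \<open>\<alpha> \<notin> \<tau> u\<close> by (rule wg_map_apply_not_in_tau)
    ultimately show ?thesis by simp
  qed
  then show "x \<in> coord_subspace {u. J \<subseteq> \<tau> u}"
    unfolding coord_subspace_def by blast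
next
  fix x :: "'v \<Rightarrow> complex"
  assume "x \<in> coord_subspace {u. J \<subseteq> \<tau> u}"
  then have "wg_map m \<tau> \<alpha> x = (\<lambda>u. - x u)" if "\<alpha> \<in> J" for \<alpha>
    using that by (intro wg_map_eq_neg_if_supported_in_tau) (auto simp: coord_subspace_def)
  then show "x \<in> joint_eigenspace (wg_map m \<tau>) J (-1)"
    unfolding joint_eigenspace_def by simp
qed

lemma joint_eigenspace_wgraph_rep:
  assumes "wgraph_rep R \<Delta> m \<tau> \<rho>" and "J \<subseteq> \<Delta>"
  shows "joint_eigenspace (\<lambda>\<alpha>. \<rho> (refl \<alpha>)) J (-1) = coord_subspace {v. J \<subseteq> \<tau> v}"
proof -
  have "joint_eigenspace (\<lambda>\<alpha>. \<rho> (refl \<alpha>)) J (-1) = joint_eigenspace (wg_map m \<tau>) J (-1)"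
    using assms unfolding wgraph_rep_def by (intro joint_eigenspace_cong) blast
  then show ?thesis
    by (simp only: joint_eigenspace_wg_map_neg)
qed

lemma refl_in_weyl_group: "\<alpha> \<in> R \<Longrightarrow> refl \<alpha> \<in> weyl_group R"
  using weyl_group.step[OF weyl_group.id_in] by fastforce

lemma card_tau_superset_eq_if_rep_iso:
  assumes "\<Delta> \<subseteq> R" and "J \<subseteq> \<Delta>"
    and rep1: "wgraph_rep R \<Delta> m1 \<tau>1 \<rho>1" and rep2: "wgraph_rep R \<Delta> m2 \<tau>2 \<rho>2"
    and "rep_iso (weyl_group R) \<rho>1 \<rho>2"
  shows "card {v. J \<subseteq> \<tau>1 v} = card {v. J \<subseteq> \<tau>2 v}"
proof -
  obtain T where "clin T" "bij T" and intertw: "\<forall>w\<in>weyl_group R. T \<circ> \<rho>1 w = \<rho>2 w \<circ> T"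
    using \<open>rep_iso (weyl_group R) \<rho>1 \<rho>2\<close> unfolding rep_iso_def by blast
  have "T ` joint_eigenspace (\<lambda>\<alpha>. \<rho>1 (refl \<alpha>)) J (-1) = joint_eigenspace (\<lambda>\<alpha>. \<rho>2 (refl \<alpha>)) J (-1)"
  proof (rule image_joint_eigenspace_intertwining[OF \<open>clin T\<close> \<open>bij T\<close>])
    show "T \<circ> \<rho>1 (refl \<alpha>) = \<rho>2 (refl \<alpha>) \<circ> T" if "\<alpha> \<in> J" for \<alpha>
      using intertw refl_in_weyl_group[of \<alpha> R] that assms(1,2) by blast
  qed
  then show ?thesis
    using \<open>clin T\<close> bij_is_inj[OF \<open>bij T\<close>]
    unfolding joint_eigenspace_wgraph_rep[OF rep1 \<open>J \<subseteq> \<Delta>\<close>]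
      joint_eigenspace_wgraph_rep[OF rep2 \<open>J \<subseteq> \<Delta>\<close>]
    by (rule card_eq_if_clin_image_coord_subspace[rotated 2])
qed

lemma card_superset_eq_sum_card_fibres:
  fixes \<tau> :: "'v::finite \<Rightarrow> 'a set"
  assumes "finite D" and "\<And>v. \<tau> v \<subseteq> D"
  shows "card {v. J \<subseteq> \<tau> v} = (\<Sum>K\<in>{K. J \<subseteq> K \<and> K \<subseteq> D}. card {v. \<tau> v = K})"
proof -
  have fibres: "{v. J \<subseteq> \<tau> v} = (\<Union>K\<in>{K. J \<subseteq> K \<and> K \<subseteq> D}. {v. \<tau> v = K})"
    using assms by auto
  have "finite {K. J \<subseteq> K \<and> K \<subseteq> D}"
    using \<open>finite D\<close> by (auto intro: finite_subset[of _ "Pow D"])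
  then show ?thesis
    unfolding fibres by (rule card_UN_disjoint) auto
qed

lemma card_fibres_eq_if_card_superset_eq:
  fixes \<tau>1 :: "'v1::finite \<Rightarrow> 'a set" and \<tau>2 :: "'v2::finite \<Rightarrow> 'a set"
  assumes "finite D" and sub1: "\<And>v. \<tau>1 v \<subseteq> D" and sub2: "\<And>v. \<tau>2 v \<subseteq> D"
    and superset_eq: "\<And>J. J \<subseteq> D \<Longrightarrow> card {v. J \<subseteq> \<tau>1 v} = card {v. J \<subseteq> \<tau>2 v}"
  shows "card {v. \<tau>1 v = J} = card {v. \<tau>2 v = J}"
proof (cases "J \<subseteq> D")
  case False
  then have "{v. \<tau>1 v = J} = {}" and "{v. \<tau>2 v = J} = {}"
    using sub1 sub2 by auto
  then show ?thesis by simp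
next
  case True
  text \<open>Downward induction on \<open>J\<close>: the superset count of \<open>J\<close> is its fibre count plus the
    fibre counts of its strict supersets.\<close>
  then show ?thesis
  proof (induction "card D - card J" arbitrary: J rule: less_induct)
    case less
    define KK where "KK = {K. J \<subset> K \<and> K \<subseteq> D}"
    have supersets: "{K. J \<subseteq> K \<and> K \<subseteq> D} = insert J KK" "J \<notin> KK"
      using less.prems unfolding KK_def by auto
    have "finite KK"
      using \<open>finite D\<close> unfolding KK_def by (auto intro: finite_subset[of _ "Pow D"])
    have "card {v. \<tau>1 v = K} = card {v. \<tau>2 v = K}" if "K \<in> KK" for K
    proof (rule less.hyps)
      have "J \<subset> K" and K: "K \<subseteq> D" using that unfolding KK_def by auto
      then have "card J < card K" and "card K \<le> card D"
        using \<open>finite D\<close> by (auto intro: psubset_card_mono card_mono finite_subset)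
      then show "card D - card K < card D - card J" by linarith
      show "K \<subseteq> D" by (fact K)
    qed
    then have "(\<Sum>K\<in>KK. card {v. \<tau>1 v = K}) = (\<Sum>K\<in>KK. card {v. \<tau>2 v = K})"
      by (rule sum.cong[OF refl])
    moreover have "card {v. J \<subseteq> \<tau>1 v} = card {v. J \<subseteq> \<tau>2 v}"
      using superset_eq[OF less.prems] .
    ultimately show ?case
      using \<open>finite KK\<close> supersets
      unfolding card_superset_eq_sum_card_fibres[OF \<open>finite D\<close> sub1]
        card_superset_eq_sum_card_fibres[OF \<open>finite D\<close> sub2]
      by simp
  qed
qed

lemma range_eq_if_card_fibres_eq:
  fixes \<tau>1 :: "'v1::finite \<Rightarrow> 'a" and \<tau>2 :: "'v2::finite \<Rightarrow> 'a"
  assumes "\<And>K. card {v. \<tau>1 v = K} = card {v. \<tau>2 v = K}"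
  shows "range \<tau>1 = range \<tau>2"
proof (rule set_eqI)
  fix K
  have "K \<in> range \<tau>1 \<longleftrightarrow> card {v. \<tau>1 v = K} > 0"
    by (auto simp: card_gt_0_iff)
  also have "\<dots> \<longleftrightarrow> card {v. \<tau>2 v = K} > 0"
    using assms by simp
  also have "\<dots> \<longleftrightarrow> K \<in> range \<tau>2"
    by (auto simp: card_gt_0_iff)
  finally show "K \<in> range \<tau>1 \<longleftrightarrow> K \<in> range \<tau>2" .
qed

theorem corollary2p11:
  fixes R \<Delta> :: "'a::euclidean_space set"
    and m1 :: "'v1::finite \<Rightarrow> 'v1 \<Rightarrow> complex" and \<tau>1 :: "'v1 \<Rightarrow> 'a set"
    and m2 :: "'v2::finite \<Rightarrow> 'v2 \<Rightarrow> complex" and \<tau>2 :: "'v2 \<Rightarrow> 'a set"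
  assumes "root_system R" and "simple_system R \<Delta>"
    and "weak_W_graph R \<Delta> m1 \<tau>1" and "weak_W_graph R \<Delta> m2 \<tau>2"
    and "\<exists>\<rho>1 \<rho>2. wgraph_rep R \<Delta> m1 \<tau>1 \<rho>1 \<and> wgraph_rep R \<Delta> m2 \<tau>2 \<rho>2
                 \<and> rep_iso (weyl_group R) \<rho>1 \<rho>2"
  shows "range \<tau>1 = range \<tau>2"
proof -
  obtain \<rho>1 \<rho>2 where rep1: "wgraph_rep R \<Delta> m1 \<tau>1 \<rho>1" and rep2: "wgraph_rep R \<Delta> m2 \<tau>2 \<rho>2"
    and iso: "rep_iso (weyl_group R) \<rho>1 \<rho>2"
    using assms(5) by blast
  have "\<Delta> \<subseteq> R" and "independent \<Delta>"
    using \<open>simple_system R \<Delta>\<close> unfolding simple_system_def by auto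
  have sub1: "\<And>v. \<tau>1 v \<subseteq> \<Delta>" and sub2: "\<And>v. \<tau>2 v \<subseteq> \<Delta>"
    using assms(3,4) unfolding weak_W_graph_def by auto
  have "card {v. \<tau>1 v = J} = card {v. \<tau>2 v = J}" for J
  proof (rule card_fibres_eq_if_card_superset_eq[OF _ sub1 sub2])
    show "finite \<Delta>"
      using \<open>independent \<Delta>\<close> by (rule independent_imp_finite)
    show "card {v. J \<subseteq> \<tau>1 v} = card {v. J \<subseteq> \<tau>2 v}" if "J \<subseteq> \<Delta>" for J
      using card_tau_superset_eq_if_rep_iso[OF \<open>\<Delta> \<subseteq> R\<close> that rep1 rep2 iso] .
  qed
  then show ?thesis
    by (rule range_eq_if_card_fibres_eq)
qed

end
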